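(* Let $F$ be any field, $N\in\mathbb{N}$, and $p,p'\in\mathbb{N}$ with $p+p'\le N+1$. If $x\in F^{N+1}$ satisfies $\operatorname{rank}(H_{p,p'-1}(x))\le p$, then $\operatorname{rank}(H_{p,p'-1}(x))\le \operatorname{rank}(H_{p-1,p'}(x))$.
   Context: $\mathbb{N}=\{0,1,2,\ldots\}$. For $N\in\mathbb{N}$, $x=(x_0,\ldots,x_N)\in F^{N+1}$ and integers $s,t\ge -1$ with $s+t\le N$, the Hankel matrix $H_{s,t}(x)$ is the $(s+1)\times(t+1)$ matrix $(x_{i+j})_{0\le i\le s,\,0\le j\le t}$ (a matrix with zero rows or columns has rank $0$). *)

theory Defs
  imports "Jordan_Normal_Form.DL_Rank"
begin

text \<open>Hankel matrix H_{s,t}(x) for s,t \<ge> -1 with s+t \<le> N, encoded by its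
  row count r = s+1 and column count c = t+1 (so r,c are naturals):
  the r x c matrix with (i,j)-entry x_{i+j}.\<close>
definition hankel :: "'a list \<Rightarrow> nat \<Rightarrow> nat \<Rightarrow> 'a mat" where
  "hankel x r c = mat r c (\<lambda>(i, j). x ! (i + j))"

definition mrank :: "'a::field mat \<Rightarrow> nat" where
  "mrank A = vec_space.rank (dim_row A) A"

end

theory Submission
  imports Defs
begin

text \<open>Let V be the column space of H_{p,p'-1}(x) in F^{p+1} and W that of H_{p-1,p'}(x) in F^p.
  By the Hankel structure, deleting the last or the first entry of a vector of V yields a
  vector of W. Call these maps \<pi> and \<sigma>. If e_p \<notin> V, then \<pi> is injective on V and
  dim V \<le> dim W. Otherwise, as dim V \<le> p, some unit vector is missing from V; choose k with
  e_k \<notin> V and e_{k+1} \<in> V, so that e_k = \<sigma> e_{k+1} \<in> W. Then y \<mapsto> \<pi> y + y_p e_k is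
  injective on V, because its kernel is spanned by e_p - e_k \<notin> V, and it maps V into W.\<close>

definition mat_range :: "'a::semiring_1 mat \<Rightarrow> 'a vec set" where
  "mat_range A = (\<lambda>v. A *\<^sub>v v) ` carrier_vec (dim_col A)"

lemma mult_mem_mat_range:
  "A \<in> carrier_mat n k \<Longrightarrow> v \<in> carrier_vec k \<Longrightarrow> A *\<^sub>v v \<in> mat_range A"
  unfolding mat_range_def by auto

lemma mat_rangeE:
  assumes "y \<in> mat_range A" "A \<in> carrier_mat n k"
  obtains v where "v \<in> carrier_vec k" "y = A *\<^sub>v v"
  using assms unfolding mat_range_def by auto

lemma mat_range_subset_carrier: "A \<in> carrier_mat n k \<Longrightarrow> mat_range A \<subseteq> carrier_vec n"
  unfolding mat_range_def by auto

lemma add_mem_mat_range: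
  assumes A: "A \<in> carrier_mat n k" and "y \<in> mat_range A" "y' \<in> mat_range A"
  shows "y + y' \<in> mat_range A"
proof -
  obtain v v' where v: "v \<in> carrier_vec k" "y = A *\<^sub>v v" and v': "v' \<in> carrier_vec k" "y' = A *\<^sub>v v'"
    using assms by (meson mat_rangeE)
  then have "y + y' = A *\<^sub>v (v + v')" using A by (simp add: mult_add_distrib_mat_vec)
  then show ?thesis using A v(1) v'(1) by (simp add: mult_mem_mat_range)
qed

lemma smult_mem_mat_range:
  fixes A :: "'a::field mat"
  assumes A: "A \<in> carrier_mat n k" and "y \<in> mat_range A"
  shows "c \<cdot>\<^sub>v y \<in> mat_range A"
proof -
  obtain v where v: "v \<in> carrier_vec k" "y = A *\<^sub>v v" using assms by (meson mat_rangeE)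
  then have "c \<cdot>\<^sub>v y = A *\<^sub>v (c \<cdot>\<^sub>v v)" using A by (simp add: mult_mat_vec[OF A])
  then show ?thesis using A v(1) by (simp add: mult_mem_mat_range)
qed

lemma (in vec_space) mat_range_eq_col_space:
  assumes "A \<in> carrier_mat n k"
  shows "mat_range A = col_space A"
  using assms unfolding col_space_eq[OF assms] mat_range_def by auto

lemma mult_unit_vec_eq_col:
  fixes G :: "'a::semiring_1 mat"
  assumes "G \<in> carrier_mat n k" "i < k"
  shows "G *\<^sub>v unit_vec k i = col G i"
  using assms by (intro eq_vecI) (auto simp: scalar_prod_def if_distrib sum.delta cong: if_cong)

lemma (in vec_space) rank_eq_dim_col_of_inj:
  assumes G: "G \<in> carrier_mat n k"
    and inj: "\<And>v. v \<in> carrier_vec k \<Longrightarrow> G *\<^sub>v v = 0\<^sub>v n \<Longrightarrow> v = 0\<^sub>v k"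
  shows "rank G = k"
proof -
  have distinct: "distinct (cols G)"
  proof (rule ccontr)
    assume "\<not> distinct (cols G)"
    then obtain i j where ij: "i < k" "j < k" "i \<noteq> j" "col G i = col G j"
      using G by (auto simp: distinct_conv_nth)
    have "G *\<^sub>v (unit_vec k i - unit_vec k j) = 0\<^sub>v n"
      using G ij by (simp add: mult_minus_distrib_mat_vec mult_unit_vec_eq_col)
    then have "unit_vec k i - unit_vec k j = (0\<^sub>v k :: 'a vec)" by (intro inj) simp_all
    then have "(unit_vec k i - unit_vec k j) $ i = (0 :: 'a)" using ij(1) by simp
    then show False using ij by simp
  qed
  moreover have "lin_indpt (set (cols G))"
    using lin_depE[OF G _ distinct] inj by metis
  ultimately show ?thesis using lin_indpt_full_rank[OF G] by blast
qed

lemma (in vec_space) rank_le_of_mat_range_subset: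
  assumes G: "G \<in> carrier_mat n k" and B: "B \<in> carrier_mat n m"
    and sub: "mat_range G \<subseteq> mat_range B"
  shows "rank G \<le> rank B"
proof -
  have colsG: "set (cols G) \<subseteq> carrier_vec n" and colsB: "set (cols B) \<subseteq> carrier_vec n"
    using G B cols_dim by blast+
  have span_sub: "span (set (cols G)) \<subseteq> span (set (cols B))"
    using sub unfolding mat_range_eq_col_space[OF G] mat_range_eq_col_space[OF B] col_space_def .
  have "subspace class_ring (span (set (cols G))) (span_vs (set (cols B)))"
    by (rule nested_subspaces[OF span_is_subspace[OF colsB] span_is_subspace[OF colsG] span_sub])
  then show ?thesis
    unfolding rank_def
    using vectorspace.subspace_dim[OF subspace_is_vs[OF span_is_subspace[OF colsB]]]
      fin_dim_span_cols[OF G] fin_dim_span_cols[OF B] by auto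
qed

lemma (in vec_space) basis_mat_exists:
  assumes B: "B \<in> carrier_mat n m"
  obtains M where "M \<in> carrier_mat n (rank B)"
    and "\<And>v. v \<in> carrier_vec (rank B) \<Longrightarrow> M *\<^sub>v v = 0\<^sub>v n \<Longrightarrow> v = 0\<^sub>v (rank B)"
    and "mat_range M = mat_range B"
proof -
  let ?W = "span (set (cols B))"
  have colsB: "set (cols B) \<subseteq> carrier_vec n" using B cols_dim by blast
  have W_sub: "submodule class_ring ?W V" using span_is_submodule[OF colsB] .
  interpret W: vectorspace class_ring "vs ?W"
    by (rule subspace_is_vs[OF span_is_subspace[OF colsB]])
  obtain b where b: "finite b" "W.basis b"
    using W.finite_basis_exists fin_dim_span_cols[OF B] by blast
  have b_W: "b \<subseteq> ?W" using b(2) unfolding W.basis_def by simp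
  have indpt: "lin_indpt b" and span_b: "span b = ?W"
    using b(2) span_li_not_depend[OF b_W W_sub] unfolding W.basis_def by auto
  have card_b: "card b = rank B" unfolding rank_def using W.dim_basis b by simp
  obtain bs where bs: "distinct bs" "set bs = b" using finite_distinct_list[OF b(1)] by blast
  have bs_carrier: "set bs \<subseteq> carrier_vec n"
    using bs(2) b_W span_is_subset2[OF colsB] by auto
  define M where "M = mat_of_cols n bs"
  have M: "M \<in> carrier_mat n (rank B)"
    unfolding M_def using bs card_b distinct_card by fastforce
  have cols_M: "cols M = bs" unfolding M_def using bs_carrier by simp
  show thesis
  proof
    show "M \<in> carrier_mat n (rank B)" by (rule M)
    show "v = 0\<^sub>v (rank B)" if "v \<in> carrier_vec (rank B)" "M *\<^sub>v v = 0\<^sub>v n" for v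
      using lin_depI[OF M that(1) _ that(2)] indpt bs unfolding cols_M by blast
    show "mat_range M = mat_range B"
      unfolding mat_range_eq_col_space[OF M] mat_range_eq_col_space[OF B] col_space_def
        cols_M bs(2) span_b ..
  qed
qed

lemma rank_ge_of_inj_mat_range_subset:
  fixes G B :: "'a::field mat"
  assumes G: "G \<in> carrier_mat n k" and B: "B \<in> carrier_mat n m"
    and inj: "\<And>v. v \<in> carrier_vec k \<Longrightarrow> G *\<^sub>v v = 0\<^sub>v n \<Longrightarrow> v = 0\<^sub>v k"
    and sub: "mat_range G \<subseteq> mat_range B"
  shows "k \<le> vec_space.rank n B"
  using vec_space.rank_eq_dim_col_of_inj[OF G inj] vec_space.rank_le_of_mat_range_subset[OF G B sub]
  by simp

lemma dim_row_le_rank_of_unit_vecs_in_mat_range: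
  fixes H :: "'a::field mat"
  assumes H: "H \<in> carrier_mat n m"
    and units: "\<And>i. i < n \<Longrightarrow> unit_vec n i \<in> mat_range H"
  shows "n \<le> vec_space.rank n H"
proof -
  have "\<forall>i\<in>{..<n}. \<exists>v. v \<in> carrier_vec m \<and> unit_vec n i = H *\<^sub>v v"
    using units H unfolding mat_range_def by auto
  then obtain z where "\<forall>i\<in>{..<n}. z i \<in> carrier_vec m \<and> unit_vec n i = H *\<^sub>v z i"
    by (rule bchoice[THEN exE])
  then have z: "\<And>i. i < n \<Longrightarrow> z i \<in> carrier_vec m \<and> unit_vec n i = H *\<^sub>v z i" by simp
  define Z where "Z = mat_of_cols m (map z [0..<n])"
  have Z: "Z \<in> carrier_mat m n" using mat_of_cols_carrier(1)[of m "map z [0..<n]"] unfolding Z_def by simp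
  have HZ: "H * Z = 1\<^sub>m n"
  proof (rule eq_matI)
    fix i j assume "i < dim_row (1\<^sub>m n)" "j < dim_col (1\<^sub>m n)"
    then have ij: "i < n" "j < n" by simp_all
    have "col Z j = z j" using z[OF ij(2)] ij(2) unfolding Z_def by simp
    then have "(H * Z) $$ (i, j) = (H *\<^sub>v z j) $ i" using H Z ij by simp
    also have "\<dots> = 1\<^sub>m n $$ (i, j)" using z[OF ij(2)] ij by (metis index_one_mat(1) index_unit_vec(1))
    finally show "(H * Z) $$ (i, j) = 1\<^sub>m n $$ (i, j)" .
  qed (use H Z in auto)
  have "mat_range (1\<^sub>m n) \<subseteq> mat_range H"
  proof
    fix y :: "'a vec" assume "y \<in> mat_range (1\<^sub>m n)"
    then obtain v where v: "v \<in> carrier_vec n" "y = 1\<^sub>m n *\<^sub>v v" by (metis mat_rangeE one_carrier_mat)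
    then have "y = H *\<^sub>v (Z *\<^sub>v v)" using H Z HZ by (metis assoc_mult_mat_vec)
    then show "y \<in> mat_range H" using H Z v(1) by (simp add: mult_mem_mat_range)
  qed
  then show ?thesis
    using rank_ge_of_inj_mat_range_subset[OF one_carrier_mat H] by simp
qed

definition id_append_col :: "'a::zero_neq_one vec \<Rightarrow> 'a mat" where
  "id_append_col u =
     mat (dim_vec u) (Suc (dim_vec u)) (\<lambda>(i, j). if j = dim_vec u then u $ i else of_bool (i = j))"

lemma id_append_col_carrier: "u \<in> carrier_vec p \<Longrightarrow> id_append_col u \<in> carrier_mat p (Suc p)"
  unfolding id_append_col_def by simp

lemma id_append_col_mult_vec:
  fixes u :: "'a::comm_semiring_1 vec"
  assumes u: "u \<in> carrier_vec p" and y: "y \<in> carrier_vec (Suc p)"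
  shows "id_append_col u *\<^sub>v y = vec_first y p + y $ p \<cdot>\<^sub>v u"
proof (rule eq_vecI)
  fix i assume "i < dim_vec (vec_first y p + y $ p \<cdot>\<^sub>v u)"
  then have i: "i < p" using u by simp
  have "(id_append_col u *\<^sub>v y) $ i = (\<Sum>j<Suc p. (if j = p then u $ i else of_bool (i = j)) * y $ j)"
    using u y i unfolding id_append_col_def by (simp add: scalar_prod_def lessThan_atLeast0)
  also have "\<dots> = (\<Sum>j<p. of_bool (i = j) * y $ j) + u $ i * y $ p"
    by simp
  also have "(\<Sum>j<p. of_bool (i = j) * y $ j) = y $ i"
    using i by (simp add: sum.delta)
  finally show "(id_append_col u *\<^sub>v y) $ i = (vec_first y p + y $ p \<cdot>\<^sub>v u) $ i"
    using u i by (simp add: vec_first_def mult.commute)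
qed (use u in \<open>simp add: id_append_col_def\<close>)

lemma id_append_col_kernel:
  fixes u :: "'a::comm_ring_1 vec"
  assumes u: "u \<in> carrier_vec p" and y: "y \<in> carrier_vec (Suc p)"
    and ker: "id_append_col u *\<^sub>v y = 0\<^sub>v p"
  shows "y = y $ p \<cdot>\<^sub>v (unit_vec (Suc p) p - (u @\<^sub>v 0\<^sub>v 1))"
proof (rule eq_vecI)
  fix i assume "i < dim_vec (y $ p \<cdot>\<^sub>v (unit_vec (Suc p) p - (u @\<^sub>v 0\<^sub>v 1)))"
  then consider "i < p" | "i = p" using u by (fastforce simp: less_Suc_eq)
  then show "y $ i = (y $ p \<cdot>\<^sub>v (unit_vec (Suc p) p - (u @\<^sub>v 0\<^sub>v 1))) $ i"
  proof cases
    case 1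
    have "(id_append_col u *\<^sub>v y) $ i = 0" using ker 1 by simp
    then have "y $ i + y $ p * u $ i = 0"
      using 1 u y by (simp add: id_append_col_mult_vec vec_first_def)
    then show ?thesis using 1 u by (simp add: eq_neg_iff_add_eq_0)
  next
    case 2
    then show ?thesis using u by simp
  qed
qed (use u y in simp)

lemma id_append_col_mult_inj:
  fixes M :: "'a::field mat"
  assumes M: "M \<in> carrier_mat (Suc p) r"
    and inj: "\<And>v. v \<in> carrier_vec r \<Longrightarrow> M *\<^sub>v v = 0\<^sub>v (Suc p) \<Longrightarrow> v = 0\<^sub>v r"
    and u: "u \<in> carrier_vec p"
    and outside: "unit_vec (Suc p) p - (u @\<^sub>v 0\<^sub>v 1) \<notin> mat_range M"
    and v: "v \<in> carrier_vec r" and ker: "id_append_col u * M *\<^sub>v v = 0\<^sub>v p"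
  shows "v = 0\<^sub>v r"
proof -
  define y where "y = M *\<^sub>v v"
  have y: "y \<in> carrier_vec (Suc p)" unfolding y_def using M v by simp
  have "id_append_col u *\<^sub>v y = 0\<^sub>v p"
    using ker M v id_append_col_carrier[OF u] unfolding y_def by (simp add: assoc_mult_mat_vec)
  then have y_eq: "y = y $ p \<cdot>\<^sub>v (unit_vec (Suc p) p - (u @\<^sub>v 0\<^sub>v 1))"
    by (rule id_append_col_kernel[OF u y])
  have "y $ p = 0"
  proof (rule ccontr)
    assume yp: "y $ p \<noteq> 0"
    have "unit_vec (Suc p) p - (u @\<^sub>v 0\<^sub>v 1) = (1 / y $ p) \<cdot>\<^sub>v y"
      using yp by (subst y_eq) (simp add: smult_smult_assoc)
    also have "\<dots> \<in> mat_range M"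
      unfolding y_def using M v by (simp add: mult_mem_mat_range smult_mem_mat_range)
    finally show False using outside by simp
  qed
  then have "M *\<^sub>v v = 0\<^sub>v (Suc p)" using y_eq u unfolding y_def by (intro eq_vecI) auto
  then show ?thesis using inj v by simp
qed

lemma id_append_col_mult_mat_range_subset:
  fixes M B :: "'a::field mat"
  assumes M: "M \<in> carrier_mat (Suc p) r" and B: "B \<in> carrier_mat p m"
    and first: "\<And>y. y \<in> mat_range M \<Longrightarrow> vec_first y p \<in> mat_range B"
    and u: "u \<in> mat_range B"
  shows "mat_range (id_append_col u * M) \<subseteq> mat_range B"
proof
  have u_carrier: "u \<in> carrier_vec p" using u mat_range_subset_carrier[OF B] by blast
  fix z assume "z \<in> mat_range (id_append_col u * M)"
  then obtain v where v: "v \<in> carrier_vec r" "z = id_append_col u * M *\<^sub>v v"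
    using M id_append_col_carrier[OF u_carrier] by (metis mat_rangeE mult_carrier_mat)
  have "z = vec_first (M *\<^sub>v v) p + (M *\<^sub>v v) $ p \<cdot>\<^sub>v u"
    using v M id_append_col_carrier[OF u_carrier]
    by (simp add: assoc_mult_mat_vec id_append_col_mult_vec[OF u_carrier])
  also have "\<dots> \<in> mat_range B"
    using B M v(1) u first by (intro add_mem_mat_range smult_mem_mat_range) (auto intro: mult_mem_mat_range)
  finally show "z \<in> mat_range B" .
qed

lemma exists_last_failure_before:
  fixes P :: "nat \<Rightarrow> bool"
  assumes "P m" "\<not> P j" "j \<le> m"
  shows "\<exists>k<m. \<not> P k \<and> P (Suc k)"
  using assms
proof (induction m)
  case (Suc m)
  show ?case
  proof (cases "P m")
    case True
    with Suc.prems have "j \<le> m" by (auto simp: le_Suc_eq)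
    then show ?thesis using Suc.IH[OF True Suc.prems(2)] less_SucI by blast
  next
    case False
    then show ?thesis using Suc.prems(1) lessI by blast
  qed
qed simp

lemma exists_correction_for_last_unit_vec:
  fixes H H' :: "'a::field mat"
  assumes H: "H \<in> carrier_mat (Suc p) q" and H': "H' \<in> carrier_mat p q'"
    and last: "\<And>y. y \<in> mat_range H \<Longrightarrow> vec_last y p \<in> mat_range H'"
    and low_rank: "vec_space.rank (Suc p) H \<le> p"
  obtains u where "u \<in> mat_range H'" "unit_vec (Suc p) p - (u @\<^sub>v 0\<^sub>v 1) \<notin> mat_range H"
proof (cases "unit_vec (Suc p) p \<in> mat_range H")
  case False
  have "H' *\<^sub>v 0\<^sub>v q' = 0\<^sub>v p" using H' by (intro eq_vecI) auto
  then have "0\<^sub>v p \<in> mat_range H'" using mult_mem_mat_range[OF H' zero_carrier_vec] by simp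
  moreover have "unit_vec (Suc p) p - (0\<^sub>v p @\<^sub>v 0\<^sub>v 1) = (unit_vec (Suc p) p :: 'a vec)"
    by (intro eq_vecI) auto
  ultimately show thesis using False by (intro that[of "0\<^sub>v p"]) simp_all
next
  case True
  have "\<exists>j<Suc p. unit_vec (Suc p) j \<notin> mat_range H"
  proof (rule ccontr)
    assume "\<not> (\<exists>j<Suc p. unit_vec (Suc p) j \<notin> mat_range H)"
    then have "Suc p \<le> vec_space.rank (Suc p) H"
      by (intro dim_row_le_rank_of_unit_vecs_in_mat_range[OF H]) auto
    then show False using low_rank by simp
  qed
  then obtain j where "j \<le> p" "unit_vec (Suc p) j \<notin> mat_range H"
    using less_Suc_eq_le by blast
  then obtain k where k: "k < p" "unit_vec (Suc p) k \<notin> mat_range H"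
    "unit_vec (Suc p) (Suc k) \<in> mat_range H"
    using exists_last_failure_before[of "\<lambda>k. unit_vec (Suc p) k \<in> mat_range H", OF True] by blast
  have "vec_last (unit_vec (Suc p) (Suc k)) p = (unit_vec p k :: 'a vec)"
    by (intro eq_vecI) (auto simp: vec_last_def unit_vec_def)
  then have u: "unit_vec p k \<in> mat_range H'" using last[OF k(3)] by simp
  have "unit_vec (Suc p) p - (unit_vec p k @\<^sub>v 0\<^sub>v 1) \<notin> mat_range H"
  proof
    assume "unit_vec (Suc p) p - (unit_vec p k @\<^sub>v 0\<^sub>v 1) \<in> mat_range H"
    then have "unit_vec (Suc p) p + (- 1) \<cdot>\<^sub>v (unit_vec (Suc p) p - (unit_vec p k @\<^sub>v 0\<^sub>v 1))
        \<in> mat_range H"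
      using H True by (intro add_mem_mat_range smult_mem_mat_range)
    also have "unit_vec (Suc p) p + (- 1) \<cdot>\<^sub>v (unit_vec (Suc p) p - (unit_vec p k @\<^sub>v 0\<^sub>v 1))
        = (unit_vec (Suc p) k :: 'a vec)"
      using k(1) by (intro eq_vecI) auto
    finally show False using k(2) by simp
  qed
  then show thesis by (rule that[OF u])
qed

lemma rank_le_rank_of_truncations_in_mat_range:
  fixes H H' :: "'a::field mat"
  assumes H: "H \<in> carrier_mat (Suc p) q" and H': "H' \<in> carrier_mat p q'"
    and first: "\<And>y. y \<in> mat_range H \<Longrightarrow> vec_first y p \<in> mat_range H'"
    and last: "\<And>y. y \<in> mat_range H \<Longrightarrow> vec_last y p \<in> mat_range H'"
    and low_rank: "vec_space.rank (Suc p) H \<le> p"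
  shows "vec_space.rank (Suc p) H \<le> vec_space.rank p H'"
proof -
  let ?r = "vec_space.rank (Suc p) H"
  obtain M where M: "M \<in> carrier_mat (Suc p) ?r"
    and M_inj: "\<And>v. v \<in> carrier_vec ?r \<Longrightarrow> M *\<^sub>v v = 0\<^sub>v (Suc p) \<Longrightarrow> v = 0\<^sub>v ?r"
    and M_range: "mat_range M = mat_range H"
    using vec_space.basis_mat_exists[OF H] by blast
  obtain u where u: "u \<in> mat_range H'" "unit_vec (Suc p) p - (u @\<^sub>v 0\<^sub>v 1) \<notin> mat_range M"
    using exists_correction_for_last_unit_vec[OF H H' last low_rank] unfolding M_range by blast
  have u_carrier: "u \<in> carrier_vec p" using u(1) mat_range_subset_carrier[OF H'] by blast
  show ?thesis
  proof (rule rank_ge_of_inj_mat_range_subset)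
    show "id_append_col u * M \<in> carrier_mat p ?r"
      using id_append_col_carrier[OF u_carrier] M by simp
    show "v = 0\<^sub>v ?r" if "v \<in> carrier_vec ?r" "id_append_col u * M *\<^sub>v v = 0\<^sub>v p" for v
      using id_append_col_mult_inj[OF M M_inj u_carrier u(2) that] .
    show "mat_range (id_append_col u * M) \<subseteq> mat_range H'"
      using id_append_col_mult_mat_range_subset[OF M H' _ u(1)] first unfolding M_range by blast
  qed (rule H')
qed

lemma vec_first_hankel_mult:
  assumes w: "w \<in> carrier_vec c"
  shows "vec_first (hankel x (Suc r) c *\<^sub>v w) r = hankel x r (Suc c) *\<^sub>v (w @\<^sub>v 0\<^sub>v 1)"
proof (rule eq_vecI)
  fix i assume "i < dim_vec (hankel x r (Suc c) *\<^sub>v (w @\<^sub>v 0\<^sub>v 1))"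
  then have i: "i < r" by (simp add: hankel_def)
  show "vec_first (hankel x (Suc r) c *\<^sub>v w) r $ i = (hankel x r (Suc c) *\<^sub>v (w @\<^sub>v 0\<^sub>v 1)) $ i"
    using i w by (simp add: hankel_def vec_first_def scalar_prod_def lessThan_atLeast0)
qed (simp add: hankel_def)

lemma vec_last_hankel_mult:
  assumes w: "w \<in> carrier_vec c"
  shows "vec_last (hankel x (Suc r) c *\<^sub>v w) r = hankel x r (Suc c) *\<^sub>v (0\<^sub>v 1 @\<^sub>v w)"
proof (rule eq_vecI)
  fix i assume "i < dim_vec (hankel x r (Suc c) *\<^sub>v (0\<^sub>v 1 @\<^sub>v w))"
  then have i: "i < r" by (simp add: hankel_def)
  have "(hankel x r (Suc c) *\<^sub>v (0\<^sub>v 1 @\<^sub>v w)) $ i = (\<Sum>j<Suc c. x ! (i + j) * (0\<^sub>v 1 @\<^sub>v w) $ j)"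
    using i w by (simp add: hankel_def scalar_prod_def lessThan_atLeast0)
  also have "\<dots> = (\<Sum>j<c. x ! (Suc i + j) * w $ j)"
    using w by (simp only: sum.lessThan_Suc_shift) (auto intro!: sum.cong)
  finally show "vec_last (hankel x (Suc r) c *\<^sub>v w) r $ i = (hankel x r (Suc c) *\<^sub>v (0\<^sub>v 1 @\<^sub>v w)) $ i"
    using i w by (simp add: hankel_def vec_last_def scalar_prod_def lessThan_atLeast0)
qed (simp add: hankel_def)

theorem lemma6:
  fixes x :: "'a::field list" and N p p' :: nat
  assumes "length x = N + 1"
    and "p + p' \<le> N + 1"
    and "mrank (hankel x (p + 1) p') \<le> p"
  shows "mrank (hankel x (p + 1) p') \<le> mrank (hankel x p (p' + 1))"
proof -
  have H: "hankel x (Suc p) p' \<in> carrier_mat (Suc p) p'"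
    and H': "hankel x p (Suc p') \<in> carrier_mat p (Suc p')" by (simp_all add: hankel_def)
  have first: "vec_first y p \<in> mat_range (hankel x p (Suc p'))"
    and last: "vec_last y p \<in> mat_range (hankel x p (Suc p'))"
    if y: "y \<in> mat_range (hankel x (Suc p) p')" for y
  proof -
    obtain w where w: "w \<in> carrier_vec p'" "y = hankel x (Suc p) p' *\<^sub>v w"
      using y H by (rule mat_rangeE)
    have "w @\<^sub>v 0\<^sub>v 1 \<in> carrier_vec (Suc p')" "0\<^sub>v 1 @\<^sub>v w \<in> carrier_vec (Suc p')"
      using append_carrier_vec[OF w(1) zero_carrier_vec[of 1]]
        append_carrier_vec[OF zero_carrier_vec[of 1] w(1)] by simp_all
    then show "vec_first y p \<in> mat_range (hankel x p (Suc p'))"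
      and "vec_last y p \<in> mat_range (hankel x p (Suc p'))"
      unfolding w(2) vec_first_hankel_mult[OF w(1)] vec_last_hankel_mult[OF w(1)]
      using H' by (simp_all add: mult_mem_mat_range)
  qed
  have "vec_space.rank (Suc p) (hankel x (Suc p) p') \<le> vec_space.rank p (hankel x p (Suc p'))"
    using rank_le_rank_of_truncations_in_mat_range[OF H H' first last] assms(3) H
    unfolding mrank_def by simp
  then show ?thesis using H H' unfolding mrank_def by simp
qed

end
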